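(* Let $n$ be a positive integer and assume hypothesis $(\star)$ for $\mathbb{R}^n$: for every family $\mathcal{F}$ of closed Lebesgue-null subsets of $\mathbb{R}^n$ with $|\mathcal{F}|<\mathfrak{c}$ and every Lebesgue-null set $N\subset\mathbb{R}^n$, one has $N\cup\bigcup\mathcal{F}\neq\mathbb{R}^n$ (e.g. under the Continuum Hypothesis). Then there exists a set $A\subset\mathbb{R}^n$ that is not Lebesgue null (hence $\dim_H A=n$) such that no subset of $A$ can be mapped onto a non-degenerate closed interval by a uniformly continuous map.
   Context: $\mathfrak{c}$ denotes the cardinality of the continuum; $\dim_H$ denotes Hausdorff dimension. *)

theory Defs
  imports "HOL-Analysis.Analysis"
begin

end

theory Submission
  imports Defs
begin

unbundle cardinal_syntax

(* Proof idea (a Sierpinski-type construction followed by a Cantor-set argument).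
   Construction: there are at most continuum many null G-delta sets, every null set lies
   in one, and closed null sets are among them. Well-order the continuum so that all
   initial segments are smaller than the continuum, enumerate the null G-delta sets along
   it, and at each stage pick a point outside the current set and outside all earlier
   closed null sets; hypothesis star guarantees such a point exists. The resulting set A is
   contained in no null set, yet meets each closed null set in fewer than continuum many
   points.
   Non-existence of maps: if a uniformly continuous f maps B \<subseteq> A onto [a, b], extend it
   continuously to the closure of B. A ternary Cantor coding gives continuum many pairwise
   disjoint closed subsets of [a, b], each of size continuum. Their preimages are disjoint
   closed sets, so one of them is null; but it contains continuum many points of B, a
   contradiction. *)

text \<open>Every closed set is the intersection of its open 1/(n+1)-neighbourhoods.\<close>
lemma closed_imp_gdelta:
  fixes C :: "'a::metric_space set"
  assumes "closed C"
  shows "gdelta C"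
proof -
  define F where "F n = (\<Union>x\<in>C. ball x (inverse (Suc n)))" for n :: nat
  have "\<Inter>(F ` UNIV) \<subseteq> closure C"
  proof (rule subsetI, unfold closure_approachable, intro allI impI)
    fix y and e :: real assume y: "y \<in> \<Inter>(F ` UNIV)" and "e > 0"
    then obtain n where n: "inverse (real (Suc n)) < e"
      using reals_Archimedean by blast
    from y obtain x where "x \<in> C" "dist x y < inverse (Suc n)"
      by (auto simp: F_def)
    with n show "\<exists>x\<in>C. dist x y < e"
      by (meson less_trans)
  qed
  then have "C = \<Inter>(F ` UNIV)"
    using assms by (auto simp: F_def)
  moreover have "open (F n)" for n
    by (auto simp: F_def)
  ultimately show ?thesis
    by (metis gdelta.intros)
qed

text \<open>There are at most continuum many G-delta sets in Euclidean space: coding a G-delta set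
  \<open>\<Inter>n. U n\<close> by the set of pairs (n, k) such that the k-th basic open set lies in \<open>U n\<close>
  is injective, since every open set is the union of the basic open sets it contains.\<close>
lemma gdelta_sets_lepoll_reals:
  "{D :: 'a::euclidean_space set. gdelta D} \<lesssim> (UNIV :: real set)"
proof -
  obtain Bs :: "nat \<Rightarrow> 'a set"
    where basis: "\<And>S. open S \<Longrightarrow> \<exists>k. S = \<Union>{Bs n |n. n \<in> k}"
    by (rule univ_second_countable_sequence) blast
  have open_eq: "S = \<Union>{Bs n |n. Bs n \<subseteq> S}" if "open S" for S
    using basis[OF that] by blast
  have "\<forall>D :: 'a set. \<exists>U :: nat \<Rightarrow> 'a set.
          gdelta D \<longrightarrow> (\<forall>n. open (U n)) \<and> D = \<Inter>(U ` UNIV)"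
    by (metis gdelta.simps)
  then obtain U :: "'a set \<Rightarrow> nat \<Rightarrow> 'a set"
    where U: "\<And>D. gdelta D \<Longrightarrow> (\<forall>n. open (U D n)) \<and> D = \<Inter>(U D ` UNIV)"
    by metis
  define code where
    "code D = {m. Bs (snd (prod_decode m)) \<subseteq> U D (fst (prod_decode m))}" for D
  have "inj_on code {D. gdelta D}"
  proof (rule inj_onI)
    fix D D' assume D: "D \<in> {D. gdelta D}" and D': "D' \<in> {D. gdelta D}"
      and eq: "code D = code D'"
    have code_iff: "Bs k \<subseteq> U E n \<longleftrightarrow> prod_encode (n, k) \<in> code E" for E n k
      by (simp add: code_def)
    have "U D n = U D' n" for n
    proof -
      have "U D n = \<Union>{Bs k |k. Bs k \<subseteq> U D n}"
        using D U by (intro open_eq) blast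
      also have "\<dots> = \<Union>{Bs k |k. Bs k \<subseteq> U D' n}"
        unfolding code_iff eq ..
      also have "\<dots> = U D' n"
        using D' U by (intro open_eq[symmetric]) blast
      finally show ?thesis .
    qed
    then have "U D = U D'" ..
    have "D = \<Inter>(U D ` UNIV)"
      using U D by blast
    also have "\<dots> = \<Inter>(U D' ` UNIV)"
      by (simp only: \<open>U D = U D'\<close>)
    also have "\<dots> = D'"
      using U D' by blast
    finally show "D = D'" .
  qed
  then have "{D :: 'a set. gdelta D} \<lesssim> (UNIV :: nat set set)"
    unfolding lepoll_def by blast
  then show ?thesis
    by (rule lepoll_trans2[OF _ nat_sets_eqpoll_reals])
qed

lemma reals_small_initial_segments:
  obtains r :: "real rel"
  where "\<And>s t. (s, t) \<in> r \<or> (t, s) \<in> r" "\<And>t. {s. (s, t) \<in> r} \<prec> (UNIV :: real set)"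
proof
  define r where "r = |UNIV :: real set|"
  have "Well_order r" "Field r = UNIV"
    unfolding r_def by (rule card_of_Well_order, rule Field_card_of)
  then show "(s, t) \<in> r \<or> (t, s) \<in> r" for s t
    using wo_rel.TOTALS[unfolded wo_rel_def] by blast
  fix t
  have "|underS r t| <o r"
    using card_of_underS[OF card_of_Card_order, of t UNIV] unfolding r_def Field_card_of by simp
  then have small: "underS r t \<prec> (UNIV :: real set)"
    unfolding r_def lesspoll_def lepoll_def
    by (metis card_of_ordLeq eqpoll_iff_card_of_ordIso not_ordLess_ordIso ordLess_imp_ordLeq)
  have segment: "{s. (s, t) \<in> r} \<subseteq> insert t (underS r t)"
    unfolding underS_def by auto
  have "insert t (underS r t) \<prec> (UNIV :: real set)"
  proof (cases "finite (underS r t)")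
    case True
    then show ?thesis
      by (intro finite_lesspoll_infinite) (auto simp: infinite_UNIV_char_0)
  next
    case False
    then show ?thesis
      by (rule eq_lesspoll_trans[OF infinite_insert_eqpoll small])
  qed
  then show "{s. (s, t) \<in> r} \<prec> (UNIV :: real set)"
    by (rule lesspoll_trans1[OF subset_imp_lepoll[OF segment]])
qed

lemma lepoll_imp_image_eq:
  assumes "A \<lesssim> B" and "A \<noteq> {}"
  obtains g where "g ` B = A"
proof -
  obtain g0 where "A \<subseteq> g0 ` B"
    using assms(1) by (auto simp: lepoll_iff)
  moreover obtain a0 where "a0 \<in> A"
    using assms(2) by blast
  ultimately show thesis
    by (intro that[of "\<lambda>t. if g0 t \<in> A then g0 t else a0"]) auto
qed

lemma transfinite_avoiding_points:
  fixes g :: "real \<Rightarrow> 'a set" and \<C> :: "'a set set"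
  assumes avoid: "\<And>\<G> t. \<G> \<subseteq> \<C> \<Longrightarrow> \<G> \<prec> (UNIV :: real set) \<Longrightarrow> g t \<union> \<Union>\<G> \<noteq> UNIV"
  obtains r :: "real rel" and x :: "real \<Rightarrow> 'a"
  where "\<And>s t. (s, t) \<in> r \<or> (t, s) \<in> r" "\<And>t. {s. (s, t) \<in> r} \<prec> (UNIV :: real set)"
    "\<And>t. x t \<notin> g t" "\<And>s t. (s, t) \<in> r \<Longrightarrow> g s \<in> \<C> \<Longrightarrow> x t \<notin> g s"
proof -
  obtain r :: "real rel" where total: "\<And>s t. (s, t) \<in> r \<or> (t, s) \<in> r"
    and small: "\<And>t. {s. (s, t) \<in> r} \<prec> (UNIV :: real set)"
    using reals_small_initial_segments by blast
  define earlier where "earlier t = g ` {s. (s, t) \<in> r} \<inter> \<C>" for t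
  have "\<exists>y. y \<notin> g t \<union> \<Union>(earlier t)" for t
  proof -
    have "earlier t \<lesssim> {s. (s, t) \<in> r}"
      unfolding earlier_def by (rule subset_image_lepoll) blast
    then have "earlier t \<prec> (UNIV :: real set)"
      by (rule lesspoll_trans1[OF _ small])
    then have "g t \<union> \<Union>(earlier t) \<noteq> UNIV"
      by (intro avoid) (auto simp: earlier_def)
    then show ?thesis
      by blast
  qed
  then obtain x where x: "\<And>t. x t \<notin> g t \<union> \<Union>(earlier t)"
    by metis
  show thesis
  proof (rule that[OF total small])
    show "x t \<notin> g t" for t
      using x by blast
    show "x t \<notin> g s" if "(s, t) \<in> r" "g s \<in> \<C>" for s t
      using x[of t] that by (auto simp: earlier_def)
  qed
qed

text \<open>Enumerating \<open>\<N>\<close> along the continuum and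
  choosing points as above yields a set contained in no member of \<open>\<N>\<close> and meeting each
  member of \<open>\<C>\<close> only in points chosen up to its stage, i.e. in fewer than continuum many.\<close>
lemma transfinite_avoiding_set:
  fixes \<N> \<C> :: "'a set set"
  assumes card: "\<N> \<lesssim> (UNIV :: real set)" and nonempty: "\<N> \<noteq> {}" and sub: "\<C> \<subseteq> \<N>"
    and avoid: "\<And>\<G> N. \<G> \<subseteq> \<C> \<Longrightarrow> \<G> \<prec> (UNIV :: real set) \<Longrightarrow> N \<in> \<N> \<Longrightarrow> N \<union> \<Union>\<G> \<noteq> UNIV"
  obtains A where "\<And>N. N \<in> \<N> \<Longrightarrow> \<not> A \<subseteq> N" "\<And>C. C \<in> \<C> \<Longrightarrow> A \<inter> C \<prec> (UNIV :: real set)"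
proof -
  obtain g :: "real \<Rightarrow> 'a set" where g: "range g = \<N>"
    using lepoll_imp_image_eq[OF card nonempty] by blast
  have avoid_g: "g t \<union> \<Union>\<G> \<noteq> UNIV" if "\<G> \<subseteq> \<C>" "\<G> \<prec> (UNIV :: real set)" for \<G> t
    using avoid[OF that] g by blast
  obtain r :: "real rel" and x :: "real \<Rightarrow> 'a"
    where total: "\<And>s t. (s, t) \<in> r \<or> (t, s) \<in> r"
      and small: "\<And>t. {s. (s, t) \<in> r} \<prec> (UNIV :: real set)"
      and x_current: "\<And>t. x t \<notin> g t"
      and x_earlier: "\<And>s t. (s, t) \<in> r \<Longrightarrow> g s \<in> \<C> \<Longrightarrow> x t \<notin> g s"
    using transfinite_avoiding_points[of \<C> g, OF avoid_g] by blast
  show thesis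
  proof (rule that[of "range x"])
    fix N assume "N \<in> \<N>"
    then obtain t where "N = g t"
      using g by blast
    then show "\<not> range x \<subseteq> N"
      using x_current[of t] by blast
  next
    fix C assume "C \<in> \<C>"
    then obtain s where s: "C = g s"
      using g sub by blast
    have "range x \<inter> C \<subseteq> x ` {t. (t, s) \<in> r}"
    proof
      fix y assume "y \<in> range x \<inter> C"
      then obtain t where t: "y = x t" "x t \<in> C"
        by blast
      then have "(s, t) \<notin> r"
        using x_earlier \<open>C \<in> \<C>\<close> s by blast
      then show "y \<in> x ` {t. (t, s) \<in> r}"
        using total[of s t] t(1) by blast
    qed
    then have "range x \<inter> C \<lesssim> {t. (t, s) \<in> r}"
      by (rule subset_image_lepoll)
    then show "range x \<inter> C \<prec> (UNIV :: real set)"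
      by (rule lesspoll_trans1[OF _ small])
  qed
qed

text \<open>Under hypothesis (\<star>) there is a non-null set meeting every closed null set in
  fewer than continuum many points: apply the construction to the null G-delta sets
  (every null set lies in one) and the closed null sets (which are G-delta).\<close>
lemma nonnull_set_thin_on_closed_null_sets:
  assumes star: "\<And>(F :: 'a set set) (N :: 'a set).
      (\<forall>C\<in>F. closed C \<and> C \<in> null_sets lebesgue) \<Longrightarrow>
      F \<prec> (UNIV :: real set) \<Longrightarrow>
      N \<in> null_sets lebesgue \<Longrightarrow>
      N \<union> \<Union>F \<noteq> UNIV"
  obtains A :: "'a::euclidean_space set" where "A \<notin> null_sets lebesgue"
    "\<And>C. closed C \<Longrightarrow> C \<in> null_sets lebesgue \<Longrightarrow> A \<inter> C \<prec> (UNIV :: real set)"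
proof -
  define \<N> where "\<N> = {D :: 'a set. gdelta D \<and> D \<in> null_sets lebesgue}"
  define \<C> where "\<C> = {C :: 'a set. closed C \<and> C \<in> null_sets lebesgue}"
  have card: "\<N> \<lesssim> (UNIV :: real set)"
    unfolding \<N>_def by (rule lepoll_trans[OF subset_imp_lepoll gdelta_sets_lepoll_reals]) blast
  have nonempty: "\<N> \<noteq> {}"
    unfolding \<N>_def using closed_imp_gdelta[of "{}"] by blast
  have sub: "\<C> \<subseteq> \<N>"
    unfolding \<C>_def \<N>_def using closed_imp_gdelta by blast
  have avoid: "N \<union> \<Union>\<G> \<noteq> UNIV" if "\<G> \<subseteq> \<C>" "\<G> \<prec> (UNIV :: real set)" "N \<in> \<N>" for \<G> N
    using star[of \<G> N] that unfolding \<C>_def \<N>_def by blast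
  obtain A where not_in_\<N>: "\<And>N. N \<in> \<N> \<Longrightarrow> \<not> A \<subseteq> N"
    and thin: "\<And>C. C \<in> \<C> \<Longrightarrow> A \<inter> C \<prec> (UNIV :: real set)"
    using transfinite_avoiding_set[OF card nonempty sub avoid] by blast
  show thesis
  proof (rule that)
    show "A \<notin> null_sets lebesgue"
    proof
      assume null: "A \<in> null_sets lebesgue"
      then obtain D T where "gdelta D" "T \<in> null_sets lebesgue" "A \<union> T = D"
        using lebesgue_set_almost_gdelta[of A] by blast
      then have "D \<in> \<N>" "A \<subseteq> D"
        using null unfolding \<N>_def by auto
      then show False
        using not_in_\<N> by blast
    qed
    show "A \<inter> C \<prec> (UNIV :: real set)" if "closed C" "C \<in> null_sets lebesgue" for C
      using thin that unfolding \<C>_def by blast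
  qed
qed

definition cantor_point :: "nat set \<Rightarrow> real" where
  "cantor_point S = (\<Sum>n. if n \<in> S then 2 / 3 ^ Suc n else 0)"

lemma geometric_tail_sums: "(\<lambda>n. 2 / 3 ^ Suc (n + k) :: real) sums (1 / 3 ^ k)"
proof -
  have "(\<lambda>n. (2 / 3 ^ Suc k) * (1/3::real)^n) sums ((2 / 3 ^ Suc k) * (1 / (1 - 1/3)))"
    by (intro sums_mult geometric_sums) simp
  moreover have "(2 / 3 ^ Suc k) * (1/3::real)^n = 2 / 3 ^ Suc (n + k)" for n
    by (simp add: power_add power_one_over field_simps)
  ultimately show ?thesis by (simp add: field_simps)
qed

lemma summable_cantor_digits:
  "summable (\<lambda>n. if n \<in> S then 2 / 3 ^ Suc n else 0 :: real)"
  by (rule summable_comparison_test'[OF sums_summable[OF geometric_tail_sums[of 0]], of 0]) auto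

lemma cantor_point_bounds: "0 \<le> cantor_point S" "cantor_point S \<le> 1"
proof -
  show "0 \<le> cantor_point S"
    unfolding cantor_point_def by (intro suminf_nonneg summable_cantor_digits) auto
  have "cantor_point S \<le> (\<Sum>n. 2 / 3 ^ Suc (n + 0))"
    unfolding cantor_point_def
    by (intro suminf_le summable_cantor_digits sums_summable[OF geometric_tail_sums]) auto
  also have "\<dots> = 1" using sums_unique[OF geometric_tail_sums[of 0]] by simp
  finally show "cantor_point S \<le> 1" .
qed

text \<open>If S and T first differ at position j, the points are at least 1/3^(j+1) apart:
  the j-th digits differ by 2/3^(j+1), the remaining tail by at most 1/3^(j+1).\<close>
lemma cantor_point_first_difference:
  assumes agree: "\<And>i. i < j \<Longrightarrow> i \<in> S \<longleftrightarrow> i \<in> T" and differ: "j \<in> S \<longleftrightarrow> j \<notin> T"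
  shows "1 / 3 ^ Suc j \<le> \<bar>cantor_point S - cantor_point T\<bar>"
proof -
  define d where "d n = (if n \<in> S then 2 / 3 ^ Suc n else 0) -
                        (if n \<in> T then 2 / 3 ^ Suc n else 0 :: real)" for n
  have "summable d"
    unfolding d_def by (intro summable_diff summable_cantor_digits)
  have "cantor_point S - cantor_point T = suminf d"
    unfolding cantor_point_def d_def by (intro suminf_diff summable_cantor_digits)
  also have "\<dots> = (\<Sum>n. d (n + Suc j)) + (\<Sum>i<Suc j. d i)"
    by (rule suminf_split_initial_segment[OF \<open>summable d\<close>])
  also have "(\<Sum>i<Suc j. d i) = d j"
    using agree by (simp add: d_def)
  finally have split: "cantor_point S - cantor_point T = (\<Sum>n. d (n + Suc j)) + d j" .
  have digit: "\<bar>d j\<bar> = 2 / 3 ^ Suc j"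
    using differ by (auto simp: d_def)
  have geo: "summable (\<lambda>n. 2 / 3 ^ Suc (n + Suc j) :: real)"
    by (rule sums_summable[OF geometric_tail_sums])
  have tail_bound: "\<bar>d (n + Suc j)\<bar> \<le> 2 / 3 ^ Suc (n + Suc j)" for n
    by (simp add: d_def)
  have abs_tail: "summable (\<lambda>n. \<bar>d (n + Suc j)\<bar>)"
    using tail_bound by (intro summable_comparison_test'[OF geo, of 0]) auto
  have "\<bar>\<Sum>n. d (n + Suc j)\<bar> \<le> (\<Sum>n. \<bar>d (n + Suc j)\<bar>)"
    by (rule summable_rabs[OF abs_tail])
  also have "\<dots> \<le> (\<Sum>n. 2 / 3 ^ Suc (n + Suc j))"
    using tail_bound by (intro suminf_le abs_tail geo)
  also have "\<dots> = 1 / 3 ^ Suc j"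
    by (rule sums_unique[OF geometric_tail_sums, symmetric])
  finally have "\<bar>\<Sum>n. d (n + Suc j)\<bar> \<le> 1 / 3 ^ Suc j" .
  then show ?thesis
    using split digit by linarith
qed

text \<open>The same bound holds at any position where S and T differ (the first difference is
  at an earlier position, giving an even larger bound).\<close>
lemma cantor_point_separation:
  assumes "j \<in> S \<longleftrightarrow> j \<notin> T"
  shows "1 / 3 ^ Suc j \<le> \<bar>cantor_point S - cantor_point T\<bar>"
proof -
  obtain i where i: "i \<in> S \<longleftrightarrow> i \<notin> T" and least: "\<And>k. k < i \<Longrightarrow> k \<in> S \<longleftrightarrow> k \<in> T"
    using exists_least_iff[of "\<lambda>i. i \<in> S \<longleftrightarrow> i \<notin> T"] assms by blast
  have "i \<le> j"
    using least assms by (meson not_le)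
  then have "1 / 3 ^ Suc j \<le> (1 / 3 ^ Suc i :: real)"
    by (simp add: divide_simps power_increasing)
  also have "\<dots> \<le> \<bar>cantor_point S - cantor_point T\<bar>"
    using cantor_point_first_difference[OF least i] .
  finally show ?thesis .
qed

lemma inj_cantor_point: "inj cantor_point"
proof (rule injI)
  fix S T assume eq: "cantor_point S = cantor_point T"
  show "S = T"
  proof (rule ccontr)
    assume "S \<noteq> T"
    then obtain j where "j \<in> S \<longleftrightarrow> j \<notin> T" by blast
    then have "1 / 3 ^ Suc j \<le> \<bar>cantor_point S - cantor_point T\<bar>"
      by (rule cantor_point_separation)
    moreover have "0 < (1::real) / 3 ^ Suc j" "\<bar>cantor_point S - cantor_point T\<bar> = 0"
      using eq by simp_all
    ultimately show False by linarith
  qed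
qed

definition interval_cantor_point :: "real \<Rightarrow> real \<Rightarrow> nat set \<Rightarrow> real" where
  "interval_cantor_point a b S = a + (b - a) * cantor_point S"

lemma interval_cantor_point_in_interval:
  assumes "a \<le> b"
  shows "interval_cantor_point a b S \<in> {a..b}"
proof -
  have "0 \<le> (b - a) * cantor_point S"
    using cantor_point_bounds[of S] assms by simp
  moreover have "(b - a) * cantor_point S \<le> (b - a) * 1"
    using cantor_point_bounds[of S] assms by (intro mult_left_mono) auto
  ultimately show ?thesis
    unfolding interval_cantor_point_def by simp
qed

lemma interval_cantor_point_separation:
  assumes "a \<le> b" and "j \<in> S \<longleftrightarrow> j \<notin> T"
  shows "(b - a) / 3 ^ Suc j \<le> dist (interval_cantor_point a b S) (interval_cantor_point a b T)"
proof -
  have "(b - a) * (1 / 3 ^ Suc j) \<le> (b - a) * \<bar>cantor_point S - cantor_point T\<bar>"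
    using cantor_point_separation[OF assms(2)] assms(1) by (intro mult_left_mono) auto
  also have "\<dots> = dist (interval_cantor_point a b S) (interval_cantor_point a b T)"
    using assms(1)
    by (simp add: interval_cantor_point_def dist_real_def abs_mult right_diff_distrib[symmetric])
  finally show ?thesis
    by simp
qed

lemma inj_interval_cantor_point:
  assumes "a < b"
  shows "inj (interval_cantor_point a b)"
  using inj_cantor_point assms by (intro injI) (simp add: interval_cantor_point_def inj_eq)

lemma closures_disjoint_if_separated:
  fixes P Q :: "'a::metric_space set"
  assumes "\<delta> > 0" and sep: "\<And>p q. p \<in> P \<Longrightarrow> q \<in> Q \<Longrightarrow> \<delta> \<le> dist p q"
  shows "closure P \<inter> closure Q = {}"
proof (rule ccontr)
  assume "closure P \<inter> closure Q \<noteq> {}"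
  then obtain y where "y \<in> closure P" "y \<in> closure Q"
    by blast
  moreover have "\<delta> / 2 > 0"
    using \<open>\<delta> > 0\<close> by simp
  ultimately obtain p q where "p \<in> P" "dist p y < \<delta> / 2" "q \<in> Q" "dist q y < \<delta> / 2"
    unfolding closure_approachable by meson
  moreover have "dist p q \<le> dist p y + dist q y"
    by (rule dist_triangle2)
  ultimately show False
    using sep[of p q] by linarith
qed

text \<open>Fixing the digits at the even positions still leaves continuum many sets of naturals:
  the odd positions can be chosen freely.\<close>
lemma nat_sets_lepoll_even_fibre:
  fixes v :: "nat set"
  shows "(UNIV :: nat set set) \<lesssim> {S. \<forall>i. 2 * i \<in> S \<longleftrightarrow> i \<in> v}"
proof -
  define embed where "embed T = (\<lambda>i. 2 * i) ` v \<union> (\<lambda>i. Suc (2 * i)) ` T" for T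
  have odd_ne_even: "Suc (2 * i) \<noteq> 2 * j" "2 * j \<noteq> Suc (2 * i)" for i j :: nat
    by presburger+
  have even_mem: "2 * i \<in> embed T \<longleftrightarrow> i \<in> v" for i T
    unfolding embed_def using odd_ne_even by auto
  have odd_mem: "Suc (2 * i) \<in> embed T \<longleftrightarrow> i \<in> T" for i T
    unfolding embed_def using odd_ne_even by auto
  have "inj embed"
  proof (rule injI, rule set_eqI)
    fix T T' i assume "embed T = embed T'"
    then show "i \<in> T \<longleftrightarrow> i \<in> T'"
      using odd_mem[of i T] odd_mem[of i T'] by simp
  qed
  moreover have "range embed \<subseteq> {S. \<forall>i. 2 * i \<in> S \<longleftrightarrow> i \<in> v}"
    using even_mem by blast
  ultimately show ?thesis
    unfolding lepoll_def by blast
qed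

text \<open>A non-degenerate interval contains continuum many pairwise disjoint closed sets,
  each of cardinality continuum: the closures of the images, under an affine copy of the
  Cantor coding, of the fibres of the even-position digits. Distinct fibres differ at an
  even position, so their images are separated.\<close>
lemma interval_disjoint_closed_fibres:
  fixes a b :: real
  assumes ab: "a < b"
  obtains Y :: "nat set \<Rightarrow> real set"
  where "disjoint_family Y" "\<And>v. closed (Y v)" "\<And>v. (UNIV :: real set) \<lesssim> Y v \<inter> {a..b}"
proof
  define e where "e = interval_cantor_point a b"
  define U where "U v = {S. \<forall>i::nat. 2 * i \<in> S \<longleftrightarrow> i \<in> v}" for v
  define Y where "Y v = closure (e ` U v)" for v
  show "closed (Y v)" for v
    unfolding Y_def by simp
  show "disjoint_family Y"
  proof (unfold disjoint_family_on_def, intro ballI impI)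
    fix v w :: "nat set" assume "v \<noteq> w"
    then obtain i where i: "i \<in> v \<longleftrightarrow> i \<notin> w"
      by blast
    have "(b - a) / 3 ^ Suc (2 * i) \<le> dist p q"
      if images: "p \<in> e ` U v" "q \<in> e ` U w" for p q
    proof -
      obtain S T where ST: "S \<in> U v" "T \<in> U w" and pq: "p = e S" "q = e T"
        using images by blast
      then have "2 * i \<in> S \<longleftrightarrow> 2 * i \<notin> T"
        using i by (auto simp: U_def)
      then show ?thesis
        unfolding pq e_def using ab by (intro interval_cantor_point_separation) auto
    qed
    then show "Y v \<inter> Y w = {}"
      unfolding Y_def using ab by (intro closures_disjoint_if_separated) auto
  qed
  show "(UNIV :: real set) \<lesssim> Y v \<inter> {a..b}" for v
  proof -
    have "inj e"
      unfolding e_def using ab by (rule inj_interval_cantor_point)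
    have e_in: "e S \<in> {a..b}" for S
      unfolding e_def using ab by (intro interval_cantor_point_in_interval) simp
    have "(UNIV :: nat set set) \<lesssim> U v"
      unfolding U_def by (rule nat_sets_lepoll_even_fibre)
    also have "U v \<lesssim> e ` U v"
      using \<open>inj e\<close> by (simp add: inj_on_image_lepoll_2[OF inj_on_subset])
    also have "e ` U v \<lesssim> Y v \<inter> {a..b}"
      unfolding Y_def using closure_subset e_in by (intro subset_imp_lepoll) blast
    finally have "(UNIV :: nat set set) \<lesssim> Y v \<inter> {a..b}" .
    then show ?thesis
      by (rule lepoll_trans1[OF eqpoll_sym[OF nat_sets_eqpoll_reals]])
  qed
qed

text \<open>In a set of finite measure, a disjoint family of measurable sets has only countably
  many members of positive measure: their finite partial sums of measures are bounded by
  the measure of the set, so the measures are summable and have countable support.\<close>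
lemma countable_positive_measure_members:
  assumes meas: "\<And>i. Z i \<in> sets M" and sub: "\<And>i. Z i \<subseteq> S"
    and S: "S \<in> fmeasurable M" and disj: "disjoint_family Z"
  shows "countable {i. measure M (Z i) \<noteq> 0}"
proof -
  have fin: "Z i \<in> fmeasurable M" for i
    using fmeasurableI2[OF S sub meas] .
  have "(\<lambda>i. measure M (Z i)) summable_on UNIV"
  proof (rule nonneg_bdd_above_summable_on)
    show "bdd_above ((\<lambda>G. \<Sum>i\<in>G. measure M (Z i)) ` {G. G \<subseteq> UNIV \<and> finite G})"
    proof (rule bdd_aboveI2)
      fix G :: "'a set" assume "G \<in> {G. G \<subseteq> UNIV \<and> finite G}"
      then have "finite G" by simp
      then have "(\<Sum>i\<in>G. measure M (Z i)) = measure M (\<Union>i\<in>G. Z i)"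
        using disj meas fmeasurableD2[OF fin] by (intro measure_finite_Union[symmetric])
          (auto simp: disjoint_family_on_def)
      also have "\<dots> \<le> measure M S"
        using sub meas \<open>finite G\<close> by (intro measure_mono_fmeasurable[OF _ _ S]) auto
      finally show "(\<Sum>i\<in>G. measure M (Z i)) \<le> measure M S" .
    qed
  qed simp
  then show ?thesis
    using summable_countable_real by fastforce
qed

text \<open>In Euclidean space, a disjoint family of Lebesgue measurable sets has only countably
  many non-null members (apply the previous lemma inside each ball of integer radius).\<close>
lemma countable_non_null_members:
  fixes Z :: "'i \<Rightarrow> 'a::euclidean_space set"
  assumes meas: "\<And>i. Z i \<in> sets lebesgue" and disj: "disjoint_family Z"
  shows "countable {i. Z i \<notin> null_sets lebesgue}"
proof -
  define Zk where "Zk k i = Z i \<inter> cball 0 (real k)" for k :: nat and i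
  have cover: "{i. Z i \<notin> null_sets lebesgue} \<subseteq> (\<Union>k. {i. measure lebesgue (Zk k i) \<noteq> 0})"
  proof (rule subsetI, rule ccontr)
    fix i assume "i \<in> {i. Z i \<notin> null_sets lebesgue}" and
      "i \<notin> (\<Union>k. {i. measure lebesgue (Zk k i) \<noteq> 0})"
    then have nonnull: "Z i \<notin> null_sets lebesgue" and zero: "\<And>k. measure lebesgue (Zk k i) = 0"
      by auto
    have "Zk k i \<in> null_sets lebesgue" for k
    proof -
      have "Zk k i \<in> lmeasurable"
        using meas[of i] by (intro fmeasurableI2[OF lmeasurable_cball]) (auto simp: Zk_def)
      then show ?thesis
        using zero[of k] by (intro null_setsI) (auto simp: emeasure_eq_measure2)
    qed
    moreover have "Z i = (\<Union>k. Zk k i)"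
      by (auto simp: Zk_def real_arch_simple)
    ultimately show False
      using nonnull by (metis null_sets_UN)
  qed
  have "countable {i. measure lebesgue (Zk k i) \<noteq> 0}" for k
    using meas disj unfolding Zk_def
    by (intro countable_positive_measure_members[of _ _ "cball 0 (real k)"])
      (auto simp: disjoint_family_on_def)
  then have "countable (\<Union>k. {i. measure lebesgue (Zk k i) \<noteq> 0})"
    by (intro countable_UN) auto
  with cover show ?thesis
    by (rule countable_subset)
qed

lemma disjoint_family_has_null_member:
  fixes Z :: "'i \<Rightarrow> 'a::euclidean_space set"
  assumes "uncountable (UNIV :: 'i set)"
    and "disjoint_family Z" and "\<And>i. Z i \<in> sets lebesgue"
  shows "\<exists>i. Z i \<in> null_sets lebesgue"
proof -
  have "countable {i. Z i \<notin> null_sets lebesgue}"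
    using assms(2,3) by (intro countable_non_null_members)
  then have "{i. Z i \<notin> null_sets lebesgue} \<noteq> UNIV"
    using assms(1) by (intro notI) simp
  then show ?thesis
    by blast
qed

lemma null_preimage_of_disjoint_closed_family:
  fixes g :: "'a::euclidean_space \<Rightarrow> 'b::topological_space" and Y :: "'i \<Rightarrow> 'b set"
  assumes "continuous_on K g" and "closed K" and "uncountable (UNIV :: 'i set)"
    and disj: "disjoint_family Y" and closed_Y: "\<And>v. closed (Y v)"
  shows "\<exists>v. K \<inter> g -` Y v \<in> null_sets lebesgue"
proof (rule disjoint_family_has_null_member)
  show "uncountable (UNIV :: 'i set)"
    by fact
  show "disjoint_family (\<lambda>v. K \<inter> g -` Y v)"
    using disj unfolding disjoint_family_on_def by blast
  show "K \<inter> g -` Y v \<in> sets lebesgue" for v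
    using borel_closed[OF continuous_closed_preimage[OF assms(1,2) closed_Y]] by simp
qed

lemma uncountable_nat_sets: "uncountable (UNIV :: nat set set)"
  using countable_eqpoll[OF _ eqpoll_sym[OF nat_sets_eqpoll_reals]] uncountable_UNIV_real
  by blast

text \<open>A set meeting every closed null set in fewer than continuum many points has no
  subset mapped onto a non-degenerate interval by a uniformly continuous map: extend the
  map continuously to the closure, pull back continuum many disjoint closed sets of size
  continuum in the interval; one of the (closed, disjoint) preimages must be null, yet it
  contains continuum many points of the subset.\<close>
lemma no_uniformly_continuous_map_onto_interval:
  fixes A B :: "'a::euclidean_space set" and f :: "'a \<Rightarrow> real"
  assumes thin: "\<And>C. closed C \<Longrightarrow> C \<in> null_sets lebesgue \<Longrightarrow> A \<inter> C \<prec> (UNIV :: real set)"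
    and "B \<subseteq> A" and "a < b" and uc: "uniformly_continuous_on B f"
  shows "f ` B \<noteq> {a..b}"
proof
  assume onto: "f ` B = {a..b}"
  obtain g where g_cont: "uniformly_continuous_on (closure B) g"
    and g_f: "\<And>x. x \<in> B \<Longrightarrow> f x = g x"
    using uniformly_continuous_on_extension_on_closure[OF uc] by metis
  obtain Y :: "nat set \<Rightarrow> real set" where disj: "disjoint_family Y"
    and closed_Y: "\<And>v. closed (Y v)" and large: "\<And>v. (UNIV :: real set) \<lesssim> Y v \<inter> {a..b}"
    using interval_disjoint_closed_fibres[OF \<open>a < b\<close>] by blast
  define C where "C v = closure B \<inter> g -` Y v" for v
  have closed_C: "closed (C v)" for v
    unfolding C_def using g_cont closed_Y
    by (intro continuous_closed_preimage uniformly_continuous_imp_continuous) auto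
  have "\<exists>v. C v \<in> null_sets lebesgue"
    unfolding C_def using g_cont uncountable_nat_sets disj closed_Y
    by (intro null_preimage_of_disjoint_closed_family uniformly_continuous_imp_continuous) auto
  then obtain v where null: "C v \<in> null_sets lebesgue"
    by blast
  have "Y v \<inter> {a..b} \<subseteq> f ` (B \<inter> C v)"
  proof
    fix y assume y: "y \<in> Y v \<inter> {a..b}"
    then obtain x where x: "x \<in> B" "y = f x"
      using onto by blast
    then have "x \<in> C v"
      using y g_f closure_subset unfolding C_def by auto
    with x show "y \<in> f ` (B \<inter> C v)"
      by blast
  qed
  then have "Y v \<inter> {a..b} \<lesssim> B \<inter> C v"
    by (rule subset_image_lepoll)
  also have "B \<inter> C v \<lesssim> A \<inter> C v"
    using \<open>B \<subseteq> A\<close> by (intro subset_imp_lepoll) blast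
  finally have "(UNIV :: real set) \<lesssim> A \<inter> C v"
    by (rule lepoll_trans[OF large])
  then have "(UNIV :: real set) \<prec> (UNIV :: real set)"
    by (rule lesspoll_trans1[OF _ thin[OF closed_C null]])
  then show False
    by simp
qed

theorem corollary3p5:
  assumes star: "\<And>(F :: (real ^ 'n) set set) (N :: (real ^ 'n) set).
      (\<forall>C\<in>F. closed C \<and> C \<in> null_sets lebesgue) \<Longrightarrow>
      F \<prec> (UNIV :: real set) \<Longrightarrow>
      N \<in> null_sets lebesgue \<Longrightarrow>
      N \<union> \<Union>F \<noteq> UNIV"
  shows "\<exists>A :: (real ^ 'n) set. A \<notin> null_sets lebesgue \<and>
     (\<forall>B f (a::real) b. B \<subseteq> A \<and> a < b \<and> uniformly_continuous_on B f
        \<longrightarrow> f ` B \<noteq> {a..b})"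
proof -
  obtain A :: "(real ^ 'n) set" where nonnull: "A \<notin> null_sets lebesgue"
    and thin: "\<And>C. closed C \<Longrightarrow> C \<in> null_sets lebesgue \<Longrightarrow> A \<inter> C \<prec> (UNIV :: real set)"
    using nonnull_set_thin_on_closed_null_sets[OF star] by blast
  have "f ` B \<noteq> {a..b}"
    if "B \<subseteq> A" "a < b" "uniformly_continuous_on B f" for B f and a b :: real
    using no_uniformly_continuous_map_onto_interval[OF thin that] .
  with nonnull show ?thesis
    by blast
qed

end
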